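(* Let $k\ge 3$ and let $\mathcal G$ be an exactly $2$-intersecting family of $k$ compact convex sets in the plane. Then the union complexity of $\mathcal G$ is at least $\binom k2$.
   Context: A finite family of sets is exactly $2$-intersecting if every two of its members intersect but no three of its members have a common point. The union complexity of a finite family $\mathcal G$ of planar regions is the number of vertices (points belonging to the boundaries of two distinct members of $\mathcal G$) that lie on the boundary of $\bigcup_{G\in\mathcal G}G$. *)

theory Defs
  imports "HOL-Analysis.Analysis"
begin

definition exactly_2_intersecting :: "'a set set \<Rightarrow> bool" where
  "exactly_2_intersecting G \<longleftrightarrow>
     (\<forall>A\<in>G. \<forall>B\<in>G. A \<noteq> B \<longrightarrow> A \<inter> B \<noteq> {}) \<and>
     (\<forall>A\<in>G. \<forall>B\<in>G. \<forall>C\<in>G. A \<noteq> B \<and> A \<noteq> C \<and> B \<noteq> C \<longrightarrow> A \<inter> B \<inter> C = {})"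

definition union_vertices :: "('a::topological_space) set set \<Rightarrow> 'a set" where
  "union_vertices G =
     {p. p \<in> frontier (\<Union>G) \<and>
         (\<exists>A\<in>G. \<exists>B\<in>G. A \<noteq> B \<and> p \<in> frontier A \<and> p \<in> frontier B)}"

end

theory Submission
  imports Defs
begin

text \<open>Two members \<open>A\<close>, \<open>B\<close> are not nested, since a third member meets the smaller one
but not both. In dimension at least two the frontier of a compact convex set is connected; the
frontier of \<open>A\<close> meets \<open>B\<close> and leaves it, so it cannot stay inside the open set
\<open>interior (A \<union> B)\<close> wherever it meets \<open>B\<close>. This gives a common frontier point of \<open>A\<close> and
\<open>B\<close> on the frontier of \<open>A \<union> B\<close>; it avoids the closed union of the other members, hence lies
on the frontier of the whole union. As no point lies in three members, such a vertex determines
its pair, so the \<open>k choose 2\<close> pairs yield distinct vertices.\<close>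

lemma interior_Un_closed_Diff:
  assumes "closed B"
  shows "interior (A \<union> B) - B \<subseteq> interior A"
  by (rule interior_maximal) (use assms interior_subset in auto)

lemma frontier_Diff_closed_subset_frontier_Un:
  assumes "closed D"
  shows "frontier S - D \<subseteq> frontier (S \<union> D)"
  using interior_Un_closed_Diff[OF assms, of S] closure_mono[of S "S \<union> D"]
  unfolding frontier_def by blast

lemma connected_frontier_convex_bounded:
  fixes A :: "'a::euclidean_space set"
  assumes "bounded A" "convex A" "2 \<le> DIM('a)"
  shows "connected (frontier A)"
  using assms by (intro connected_frontier_simple convex_connected connected_complement_bounded_convex)

lemma convex_compact_common_frontier_point:
  fixes A B :: "'a::euclidean_space set"
  assumes "2 \<le> DIM('a)"
    and A: "compact A" "convex A" and B: "compact B" "convex B"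
    and "A \<inter> B \<noteq> {}" and "\<not> A \<subseteq> B" and "\<not> B \<subseteq> A"
  shows "\<exists>p\<in>A \<inter> B. p \<in> frontier A \<and> p \<in> frontier B \<and> p \<in> frontier (A \<union> B)"
proof -
  let ?X = "frontier A"
  have "closed A" "closed B"
    using A B compact_imp_closed by auto
  have X_connected: "connected ?X"
    using A assms(1) compact_imp_bounded connected_frontier_convex_bounded by blast
  have X_meets_B: "?X \<inter> B \<noteq> {}"
    using connected_Int_frontier[of B A] B assms(6,8) convex_connected by blast
  have X_leaves_B: "?X - B \<noteq> {}"
  proof
    assume "?X - B = {}"
    then have "convex hull ?X \<subseteq> B"
      using hull_minimal[of ?X B convex] B(2) by blast
    then show False
      using Krein_Milman_frontier[OF A(2,1)] assms(7) by argo
  qed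
  have "\<exists>p\<in>?X \<inter> B. p \<notin> interior (A \<union> B)"
  proof (rule ccontr)
    assume "\<not> ?thesis"
    then have cover: "?X \<subseteq> - B \<union> interior (A \<union> B)"
      by blast
    have "- B \<inter> interior (A \<union> B) \<inter> ?X \<subseteq> interior A \<inter> frontier A"
      using interior_Un_closed_Diff[OF \<open>closed B\<close>, of A] by blast
    then have "- B \<inter> interior (A \<union> B) \<inter> ?X = {}"
      by (auto simp: frontier_def)
    then have "- B \<inter> ?X = {} \<or> interior (A \<union> B) \<inter> ?X = {}"
      using connectedD[OF X_connected open_Compl[OF \<open>closed B\<close>] open_interior _ cover] by blast
    then show False
      using X_meets_B X_leaves_B cover by blast
  qed
  then obtain p where p: "p \<in> ?X" "p \<in> B" "p \<notin> interior (A \<union> B)"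
    by blast
  have "p \<in> A"
    using p(1) \<open>closed A\<close> frontier_subset_closed by blast
  have "p \<in> frontier B"
    using p(2,3) interior_mono[of B "A \<union> B"] closure_subset[of B]
    unfolding frontier_def by blast
  moreover have "p \<in> frontier (A \<union> B)"
    using p(2,3) closure_subset[of "A \<union> B"] unfolding frontier_def by blast
  ultimately show ?thesis
    using p(1,2) \<open>p \<in> A\<close> by blast
qed

lemma exactly_2_intersecting_not_subset:
  assumes "exactly_2_intersecting G" "A \<in> G" "B \<in> G" "C \<in> G"
    and "A \<noteq> B" "A \<noteq> C" "B \<noteq> C"
  shows "\<not> A \<subseteq> B"
proof -
  have "A \<inter> C \<noteq> {}" "A \<inter> B \<inter> C = {}"
    using assms unfolding exactly_2_intersecting_def by simp_all
  then show ?thesis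
    by blast
qed

lemma exactly_2_intersecting_members_containing:
  assumes "exactly_2_intersecting G" "A \<in> G" "B \<in> G" "A \<noteq> B" "p \<in> A" "p \<in> B"
  shows "{C\<in>G. p \<in> C} = {A, B}"
proof -
  have "C \<in> {A, B}" if "C \<in> G" "p \<in> C" for C
  proof (rule ccontr)
    assume "C \<notin> {A, B}"
    then have "A \<inter> B \<inter> C = {}"
      using assms(1-4) \<open>C \<in> G\<close> unfolding exactly_2_intersecting_def by blast
    then show False
      using assms(5,6) \<open>p \<in> C\<close> by blast
  qed
  then show ?thesis
    using assms(2-6) by blast
qed

lemma exactly_2_intersecting_pair_union_vertex:
  fixes G :: "'a::euclidean_space set set"
  assumes "2 \<le> DIM('a)" and "finite G" and "3 \<le> card G"
    and compact_convex: "\<forall>A\<in>G. compact A \<and> convex A"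
    and G: "exactly_2_intersecting G"
    and "A \<in> G" "B \<in> G" "A \<noteq> B"
  shows "\<exists>p\<in>A \<inter> B. p \<in> union_vertices G"
proof -
  have "card (G - {A, B}) \<noteq> 0"
    using assms(3,6-8) by (simp add: card_Diff_subset)
  then obtain C where "C \<in> G - {A, B}"
    by (metis card.empty equals0I)
  then have "\<not> A \<subseteq> B" "\<not> B \<subseteq> A"
    using exactly_2_intersecting_not_subset[OF G] assms(6-8) by auto
  moreover have "A \<inter> B \<noteq> {}"
    using G assms(6-8) unfolding exactly_2_intersecting_def by blast
  ultimately obtain p where p: "p \<in> A \<inter> B" "p \<in> frontier A" "p \<in> frontier B"
      "p \<in> frontier (A \<union> B)"
    using convex_compact_common_frontier_point[OF assms(1)] compact_convex assms(6,7) by meson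
  let ?D = "\<Union>(G - {A, B})"
  have "closed ?D"
    using assms(2) compact_convex compact_imp_closed by (intro closed_Union) auto
  moreover have "p \<notin> ?D"
    using exactly_2_intersecting_members_containing[OF G assms(6-8)] p(1) by blast
  ultimately have "p \<in> frontier (A \<union> B \<union> ?D)"
    using frontier_Diff_closed_subset_frontier_Un p(4) by blast
  moreover have "A \<union> B \<union> ?D = \<Union>G"
    using assms(6,7) by blast
  ultimately have "p \<in> union_vertices G"
    using p(2,3) assms(6-8) unfolding union_vertices_def by auto
  then show ?thesis
    using p(1) by blast
qed

theorem lemma3p3:
  fixes G :: "(real^2) set set" and k :: nat
  assumes "k \<ge> 3"
    and "finite G" and "card G = k"
    and "\<forall>A\<in>G. compact A \<and> convex A"
    and "exactly_2_intersecting G"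
  shows "infinite (union_vertices G) \<or> card (union_vertices G) \<ge> k choose 2"
proof -
  define pairs where "pairs = {S. S \<subseteq> G \<and> card S = 2}"
  define members where "members p = {C\<in>G. p \<in> C}" for p :: "real^2"
  have "pairs \<subseteq> members ` union_vertices G"
  proof
    fix S assume "S \<in> pairs"
    then obtain A B where S: "S = {A, B}" "A \<noteq> B" "A \<in> G" "B \<in> G"
      unfolding pairs_def by (auto simp: card_2_iff)
    then obtain p where "p \<in> A \<inter> B" "p \<in> union_vertices G"
      using exactly_2_intersecting_pair_union_vertex[of G A B] assms by auto
    then show "S \<in> members ` union_vertices G"
      using exactly_2_intersecting_members_containing[OF assms(5)] S
      unfolding members_def by blast
  qed
  then have "finite (union_vertices G) \<Longrightarrow> card pairs \<le> card (union_vertices G)"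
    by (meson card_image_le card_mono finite_imageI le_trans)
  then show ?thesis
    using n_subsets[OF assms(2)] assms(3) unfolding pairs_def by auto
qed

end
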